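(* Assume the Lipschitz gradient assumption, $r_1>L_x$, $r_2>L_y$, and let $\{(x^t,y^t,z^t,v^t)\}$ be generated by DS-GDA. Then for every $t\ge0$, $$q(z^t)\ge q(z^{t+1})+\frac{r_1}{2}\langle z^t+z^{t+1}-2x(z^t,v(z^{t+1})),z^t-z^{t+1}\rangle.$$
   Context: Let $\mathcal X\subset\mathbb R^n$, $\mathcal Y\subset\mathbb R^d$ be nonempty convex compact sets and $f:\mathbb R^n\times\mathbb R^d\to\mathbb R$ continuously differentiable. Lipschitz gradient assumption: there are $L_x,L_y>0$ such that for all $x,x'\in\mathcal X$, $y,y'\in\mathcal Y$, $\|\nabla_x f(x,y)-\nabla_x f(x',y')\|\le L_x(\|x-x'\|+\|y-y'\|)$ and $\|\nabla_y f(x,y)-\nabla_y f(x',y')\|\le L_y(\|x-x'\|+\|y-y'\|)$. $F(x,y,z,v)=f(x,y)+\frac{r_1}{2}\|x-z\|^2-\frac{r_2}{2}\|y-v\|^2$; $h(x,z,v)=\max_{y\in\mathcal Y}F(x,y,z,v)$; $p(z,v)=\min_{x\in\mathcal X}h(x,z,v)$; $x(z,v)=\arg\min_{x\in\mathcal X}h(x,z,v)$; $q(z)=\max_{v\in\mathbb R^d}p(z,v)$ with $v(z)$ a maximizer (assumed to exist). DS-GDA: given $x^0,y^0,z^0,v^0$, stepsizes $c,\alpha>0$, $\beta,\mu\in(0,1)$, for $t\ge0$: $x^{t+1}=\mathrm{proj}_{\mathcal X}(x^t-c\nabla_xF(x^t,y^t,z^t,v^t))$; $y^{t+1}=\mathrm{proj}_{\mathcal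 Y}(y^t+\alpha\nabla_yF(x^{t+1},y^t,z^t,v^t))$; $z^{t+1}=z^t+\beta(x^{t+1}-z^t)$; $v^{t+1}=v^t+\mu(y^{t+1}-v^t)$. *)

theory Defs
  imports "HOL-Analysis.Analysis"
begin

definition Freg :: "('a::euclidean_space \<Rightarrow> 'b::euclidean_space \<Rightarrow> real) \<Rightarrow> real \<Rightarrow> real
    \<Rightarrow> 'a \<Rightarrow> 'b \<Rightarrow> 'a \<Rightarrow> 'b \<Rightarrow> real" where
  "Freg f r1 r2 x y z v = f x y + r1 / 2 * (norm (x - z))\<^sup>2 - r2 / 2 * (norm (y - v))\<^sup>2"

definition hfun :: "('a::euclidean_space \<Rightarrow> 'b::euclidean_space \<Rightarrow> real) \<Rightarrow> real \<Rightarrow> real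
    \<Rightarrow> 'b set \<Rightarrow> 'a \<Rightarrow> 'a \<Rightarrow> 'b \<Rightarrow> real" where
  "hfun f r1 r2 Y x z v = (SUP y\<in>Y. Freg f r1 r2 x y z v)"

definition pfun :: "('a::euclidean_space \<Rightarrow> 'b::euclidean_space \<Rightarrow> real) \<Rightarrow> real \<Rightarrow> real
    \<Rightarrow> 'a set \<Rightarrow> 'b set \<Rightarrow> 'a \<Rightarrow> 'b \<Rightarrow> real" where
  "pfun f r1 r2 X Y z v = (INF x\<in>X. hfun f r1 r2 Y x z v)"

text \<open>x(z,v) = argmin over x in X of h(x,z,v) (unique under r1 > L_x).\<close>
definition xarg :: "('a::euclidean_space \<Rightarrow> 'b::euclidean_space \<Rightarrow> real) \<Rightarrow> real \<Rightarrow> real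
    \<Rightarrow> 'a set \<Rightarrow> 'b set \<Rightarrow> 'a \<Rightarrow> 'b \<Rightarrow> 'a" where
  "xarg f r1 r2 X Y z v = (THE x. x \<in> X \<and> hfun f r1 r2 Y x z v = pfun f r1 r2 X Y z v)"

definition qfun :: "('a::euclidean_space \<Rightarrow> 'b::euclidean_space \<Rightarrow> real) \<Rightarrow> real \<Rightarrow> real
    \<Rightarrow> 'a set \<Rightarrow> 'b set \<Rightarrow> 'a \<Rightarrow> real" where
  "qfun f r1 r2 X Y z = (SUP v\<in>UNIV. pfun f r1 r2 X Y z v)"

end

theory Submission
  imports Defs
begin

text \<open>Put \<open>v = v(z\<^sup>t\<^sup>+\<^sup>1)\<close> and \<open>x\<^sub>0 = x(z\<^sup>t, v)\<close>. Then \<open>q(z\<^sup>t) \<ge> p(z\<^sup>t, v) = h(x\<^sub>0, z\<^sup>t, v)\<close> and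
  \<open>q(z\<^sup>t\<^sup>+\<^sup>1) = p(z\<^sup>t\<^sup>+\<^sup>1, v) \<le> h(x\<^sub>0, z\<^sup>t\<^sup>+\<^sup>1, v)\<close>. Since \<open>h\<close> depends on \<open>z\<close> only through the
  \<open>y\<close>-independent term \<open>r\<^sub>1/2 \<parallel>x - z\<parallel>\<^sup>2\<close>, the difference of the two values of \<open>h\<close> is
  \<open>r\<^sub>1/2 (\<parallel>x\<^sub>0 - z\<^sup>t\<parallel>\<^sup>2 - \<parallel>x\<^sub>0 - z\<^sup>t\<^sup>+\<^sup>1\<parallel>\<^sup>2)\<close>, which is the inner product in the claim.
  The real work is to show that \<open>x(z, v)\<close> is a minimiser at all: \<open>h(\<cdot>, z, v)\<close> is continuous on
  the compact set \<open>X\<close>, and because \<open>\<nabla>\<^sub>xf\<close> is \<open>L\<^sub>x\<close>-Lipschitz and \<open>r\<^sub>1 > L\<^sub>x\<close> it is strongly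
  midpoint convex, so the minimiser is unique.\<close>

lemma cSUP_le_cSUP_plus:
  fixes g h :: "'a \<Rightarrow> real"
  assumes "Y \<noteq> {}" "bdd_above (h ` Y)" "\<And>y. y \<in> Y \<Longrightarrow> g y \<le> h y + e"
  shows "(SUP y\<in>Y. g y) \<le> (SUP y\<in>Y. h y) + e"
proof (rule cSUP_least[OF assms(1)])
  fix y assume "y \<in> Y"
  with assms(2,3) show "g y \<le> (SUP y\<in>Y. h y) + e"
    by (meson add_right_mono cSUP_upper order_trans)
qed

lemma bdd_above_section_compact:
  fixes G :: "'a::topological_space \<Rightarrow> 'b::topological_space \<Rightarrow> real"
  assumes "compact X" "compact Y" "continuous_on (X \<times> Y) (\<lambda>(x, y). G x y)" "x \<in> X"
  shows "bdd_above (G x ` Y)"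
proof -
  have "bounded ((\<lambda>(x, y). G x y) ` (X \<times> Y))"
    using assms(1-3) by (intro compact_imp_bounded compact_continuous_image compact_Times)
  moreover have "G x ` Y \<subseteq> (\<lambda>(x, y). G x y) ` (X \<times> Y)"
    using assms(4) by force
  ultimately show ?thesis
    by (meson bdd_above_mono bounded_imp_bdd_above)
qed

lemma continuous_on_SUP_compact:
  fixes G :: "'a::metric_space \<Rightarrow> 'b::metric_space \<Rightarrow> real"
  assumes X: "compact X" and Y: "compact Y" "Y \<noteq> {}"
    and cont: "continuous_on (X \<times> Y) (\<lambda>(x, y). G x y)"
  shows "continuous_on X (\<lambda>x. SUP y\<in>Y. G x y)"
  unfolding continuous_on_iff
proof (intro ballI allI impI)
  fix x0 e assume x0: "x0 \<in> X" and e: "(0::real) < e"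
  have "uniformly_continuous_on (X \<times> Y) (\<lambda>(x, y). G x y)"
    using X Y cont by (intro compact_uniformly_continuous compact_Times)
  then obtain d where d: "d > 0" and close:
      "\<And>p p'. p \<in> X \<times> Y \<Longrightarrow> p' \<in> X \<times> Y \<Longrightarrow> dist p' p < d \<Longrightarrow>
        dist ((\<lambda>(x, y). G x y) p') ((\<lambda>(x, y). G x y) p) < e/2"
    using e unfolding uniformly_continuous_on_def by (metis half_gt_zero)
  have "dist (SUP y\<in>Y. G x y) (SUP y\<in>Y. G x0 y) < e" if x: "x \<in> X" "dist x x0 < d" for x
  proof -
    have near: "G x y \<le> G x0 y + e/2 \<and> G x0 y \<le> G x y + e/2" if "y \<in> Y" for y
    proof -
      have "dist (G x y) (G x0 y) < e/2"
        using close[of "(x0, y)" "(x, y)"] x x0 that by (simp add: dist_Pair_Pair)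
      then show ?thesis
        unfolding dist_real_def by linarith
    qed
    have "(SUP y\<in>Y. G x y) \<le> (SUP y\<in>Y. G x0 y) + e/2"
      by (intro cSUP_le_cSUP_plus Y(2) bdd_above_section_compact[OF X Y(1) cont x0]) (use near in blast)
    moreover have "(SUP y\<in>Y. G x0 y) \<le> (SUP y\<in>Y. G x y) + e/2"
      by (intro cSUP_le_cSUP_plus Y(2) bdd_above_section_compact[OF X Y(1) cont x(1)]) (use near in blast)
    ultimately show ?thesis
      using e by (simp add: dist_real_def abs_le_iff)
  qed
  with d show "\<exists>d>0. \<forall>x\<in>X. dist x x0 < d \<longrightarrow> dist (SUP y\<in>Y. G x y) (SUP y\<in>Y. G x0 y) < e"
    by blast
qed

lemma norm_midpoint_diff_sq:
  fixes a b z :: "'a::real_inner"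
  shows "(norm (midpoint a b - z))\<^sup>2 = ((norm (a - z))\<^sup>2 + (norm (b - z))\<^sup>2) / 2 - (norm (a - b))\<^sup>2 / 4"
  unfolding power2_norm_eq_inner midpoint_def
  by (simp add: inner_add_left inner_add_right inner_diff_left inner_diff_right inner_commute field_simps)

lemma norm_diff_sq_diff:
  fixes a b c :: "'a::real_inner"
  shows "(norm (c - a))\<^sup>2 - (norm (c - b))\<^sup>2 = (a + b - 2 *\<^sub>R c) \<bullet> (a - b)"
  unfolding power2_norm_eq_inner
  by (simp add: inner_add_left inner_add_right inner_diff_left inner_diff_right inner_commute algebra_simps)

lemma has_derivative_partial_fst:
  fixes f :: "'a::real_inner \<Rightarrow> 'b::real_inner \<Rightarrow> real"
  assumes "((\<lambda>(u, w). f u w) has_derivative (\<lambda>(h, k). gx \<bullet> h + gy \<bullet> k)) (at (x, y))"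
  shows "((\<lambda>u. f u y) has_derivative (\<lambda>h. gx \<bullet> h)) (at x)"
proof -
  have "((\<lambda>u. (u, y)) has_derivative (\<lambda>h. (h, 0))) (at x)"
    by (auto intro!: derivative_eq_intros)
  from has_derivative_compose[OF this assms] show ?thesis
    by (simp add: o_def)
qed

lemma lipschitz_gradient_midpoint_le:
  fixes \<phi> :: "'a::real_inner \<Rightarrow> real"
  assumes S: "convex S" and a: "a \<in> S" and b: "b \<in> S"
    and deriv: "\<And>x. x \<in> S \<Longrightarrow> (\<phi> has_derivative (\<lambda>h. g x \<bullet> h)) (at x)"
    and lip: "\<And>x x'. x \<in> S \<Longrightarrow> x' \<in> S \<Longrightarrow> norm (g x - g x') \<le> L * norm (x - x')"
  shows "\<phi> (midpoint a b) \<le> (\<phi> a + \<phi> b) / 2 + L / 8 * (norm (a - b))\<^sup>2"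
proof -
  define d where "d = b - a"
  define p where "p = (\<lambda>s::real. a + s *\<^sub>R d)"
  \<comment> \<open>The Lipschitz bound makes \<open>\<psi>'\<close> monotone, so \<open>\<psi>\<close> is convex on \<open>[0, 1]\<close>.\<close>
  define \<psi> where "\<psi> = (\<lambda>s. \<phi> (p s) + L / 2 * s\<^sup>2 * (norm d)\<^sup>2)"
  define \<psi>' where "\<psi>' = (\<lambda>s. g (p s) \<bullet> d + L * s * (norm d)\<^sup>2)"
  have pS: "p s \<in> S" if "s \<in> {0..1}" for s
  proof -
    have "p s = (1 - s) *\<^sub>R a + s *\<^sub>R b" by (simp add: p_def d_def algebra_simps)
    with that S a b show ?thesis by (simp add: convex_alt)
  qed
  have "(\<psi> has_real_derivative \<psi>' s) (at s)" if "s \<in> {0..1}" for s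
  proof -
    have "(p has_derivative (\<lambda>t. t *\<^sub>R d)) (at s)"
      unfolding p_def by (auto intro!: derivative_eq_intros)
    from has_derivative_compose[OF this deriv[OF pS[OF that]]]
    have "((\<lambda>s. \<phi> (p s)) has_real_derivative g (p s) \<bullet> d) (at s)"
      by (simp add: o_def has_field_derivative_def mult.commute[of _ "g (p s) \<bullet> d"])
    then show ?thesis
      unfolding \<psi>_def \<psi>'_def by (auto intro!: derivative_eq_intros simp: power2_eq_square)
  qed
  moreover have "\<psi>' s \<le> \<psi>' s'" if s: "s \<in> {0..1}" "s' \<in> {0..1}" "s \<le> s'" for s s'
  proof -
    have "(g (p s) - g (p s')) \<bullet> d \<le> norm (g (p s) - g (p s')) * norm d"
      by (rule norm_cauchy_schwarz)
    also have "\<dots> \<le> L * norm (p s - p s') * norm d"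
      using lip[OF pS pS] s by (simp add: mult_right_mono)
    also have "p s - p s' = (s - s') *\<^sub>R d"
      by (simp add: p_def algebra_simps)
    also have "L * norm ((s - s') *\<^sub>R d) * norm d = L * (s' - s) * (norm d)\<^sup>2"
      using s by (simp add: power2_eq_square)
    finally show ?thesis
      using s by (simp add: \<psi>'_def inner_diff_left power2_eq_square algebra_simps)
  qed
  ultimately have "convex_on {0..1} \<psi>"
    by (intro convex_on_realI[where f' = \<psi>']) auto
  then have "\<psi> ((1 - 1/2) *\<^sub>R 0 + (1/2) *\<^sub>R 1) \<le> (1 - 1/2) * \<psi> 0 + (1/2) * \<psi> 1"
    by (rule convex_onD) auto
  moreover have "p (1/2) = midpoint a b" "p 0 = a" "p 1 = b"
    by (auto simp: p_def d_def midpoint_def algebra_simps simp flip: scaleR_add_left)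
  ultimately show ?thesis
    by (simp add: \<psi>_def d_def norm_minus_commute power2_eq_square field_simps)
qed

lemma continuous_on_section:
  assumes "continuous_on (X \<times> Y) (\<lambda>(x, y). f x y)" "x \<in> X"
  shows "continuous_on Y (f x)"
proof -
  have "continuous_on Y ((\<lambda>(x, y). f x y) \<circ> Pair x)"
    using assms by (intro continuous_on_compose continuous_intros continuous_on_subset[OF assms(1)]) auto
  then show ?thesis
    by (simp add: o_def)
qed

lemma continuous_on_Freg:
  assumes "continuous_on (X \<times> Y) (\<lambda>(x, y). f x y)"
  shows "continuous_on (X \<times> Y) (\<lambda>(x, y). Freg f r1 r2 x y z v)"
proof -
  have "continuous_on (X \<times> Y) (\<lambda>p. f (fst p) (snd p))"
    using assms by (simp add: case_prod_beta')
  then show ?thesis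
    unfolding Freg_def case_prod_beta' by (intro continuous_intros)
qed

text \<open>With \<open>r = 0\<close> the argument \<open>z\<close> is irrelevant: \<open>hfun f 0 r2 Y x z v\<close> is \<open>h\<close> without its
  proximal term in \<open>x\<close>.\<close>

lemma hfun_prox_split:
  assumes "compact Y" "Y \<noteq> {}" "continuous_on Y (f x)"
  shows "hfun f r r2 Y x z v = hfun f 0 r2 Y x z v + r / 2 * (norm (x - z))\<^sup>2"
proof -
  have "continuous_on Y (\<lambda>y. Freg f 0 r2 x y z v)"
    using assms(3) unfolding Freg_def by (intro continuous_intros) auto
  then have bdd: "bdd_above ((\<lambda>y. Freg f 0 r2 x y z v) ` Y)"
    using assms(1) by (meson bounded_imp_bdd_above compact_continuous_image compact_imp_bounded)
  have "Freg f r r2 x y z v = r / 2 * (norm (x - z))\<^sup>2 + Freg f 0 r2 x y z v" for y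
    by (simp add: Freg_def)
  then have "hfun f r r2 Y x z v = (SUP y\<in>Y. r / 2 * (norm (x - z))\<^sup>2 + Freg f 0 r2 x y z v)"
    by (simp only: hfun_def)
  also have "\<dots> = r / 2 * (norm (x - z))\<^sup>2 + hfun f 0 r2 Y x z v"
    unfolding hfun_def by (rule Sup_add_eq[OF bdd assms(2)])
  finally show ?thesis
    by linarith
qed

lemma hfun_midpoint_le:
  fixes f :: "'a::euclidean_space \<Rightarrow> 'b::euclidean_space \<Rightarrow> real"
  assumes X: "convex X" "compact X" and Y: "compact Y" "Y \<noteq> {}"
    and cont: "continuous_on (X \<times> Y) (\<lambda>(x, y). f x y)"
    and deriv: "\<And>x y. x \<in> X \<Longrightarrow> y \<in> Y \<Longrightarrow> ((\<lambda>u. f u y) has_derivative (\<lambda>h. gx x y \<bullet> h)) (at x)"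
    and lip: "\<And>x x' y. x \<in> X \<Longrightarrow> x' \<in> X \<Longrightarrow> y \<in> Y \<Longrightarrow> norm (gx x y - gx x' y) \<le> L * norm (x - x')"
    and a: "a \<in> X" and b: "b \<in> X"
  shows "hfun f r1 r2 Y (midpoint a b) z v
           \<le> (hfun f r1 r2 Y a z v + hfun f r1 r2 Y b z v) / 2 - (r1 - L) / 8 * (norm (a - b))\<^sup>2"
proof -
  let ?h0 = "\<lambda>x. hfun f 0 r2 Y x z v"
  have m: "midpoint a b \<in> X"
    using X(1) a b closed_segment_subset midpoint_in_closed_segment by blast
  have bdd: "bdd_above ((\<lambda>y. Freg f 0 r2 x y z v) ` Y)" if "x \<in> X" for x
    using bdd_above_section_compact[OF X(2) Y(1) continuous_on_Freg[OF cont] that] .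
  have h0_mid: "?h0 (midpoint a b) \<le> (?h0 a + ?h0 b) / 2 + L / 8 * (norm (a - b))\<^sup>2"
    unfolding hfun_def[of f 0 r2 Y "midpoint a b"]
  proof (rule cSUP_least[OF Y(2)])
    fix y assume y: "y \<in> Y"
    have "f (midpoint a b) y \<le> (f a y + f b y) / 2 + L / 8 * (norm (a - b))\<^sup>2"
      using y by (intro lipschitz_gradient_midpoint_le[OF X(1) a b, where g = "\<lambda>x. gx x y"] deriv lip)
    moreover have "Freg f 0 r2 a y z v \<le> ?h0 a" "Freg f 0 r2 b y z v \<le> ?h0 b"
      unfolding hfun_def using y bdd a b by (auto intro: cSUP_upper)
    ultimately show "Freg f 0 r2 (midpoint a b) y z v \<le> (?h0 a + ?h0 b) / 2 + L / 8 * (norm (a - b))\<^sup>2"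
      by (simp add: Freg_def field_simps)
  qed
  have split: "hfun f r1 r2 Y x z v = ?h0 x + r1 / 2 * (norm (x - z))\<^sup>2" if "x \<in> X" for x
    using hfun_prox_split[where f = f and x = x, OF Y continuous_on_section[OF cont that]] .
  show ?thesis
    unfolding split[OF m] split[OF a] split[OF b] norm_midpoint_diff_sq
    using h0_mid by (simp add: field_simps)
qed

lemma pfun_le_hfun:
  assumes "compact X" "continuous_on X (\<lambda>x. hfun f r1 r2 Y x z v)" "x \<in> X"
  shows "pfun f r1 r2 X Y z v \<le> hfun f r1 r2 Y x z v"
  unfolding pfun_def
  using assms by (meson bounded_imp_bdd_below cINF_lower compact_continuous_image compact_imp_bounded)

lemma xarg_minimizes_hfun:
  assumes X: "convex X" "compact X" "X \<noteq> {}"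
    and cont: "continuous_on X (\<lambda>x. hfun f r1 r2 Y x z v)"
    and strict: "\<And>a b. a \<in> X \<Longrightarrow> b \<in> X \<Longrightarrow> a \<noteq> b \<Longrightarrow>
      hfun f r1 r2 Y (midpoint a b) z v < (hfun f r1 r2 Y a z v + hfun f r1 r2 Y b z v) / 2"
  shows "xarg f r1 r2 X Y z v \<in> X" "hfun f r1 r2 Y (xarg f r1 r2 X Y z v) z v = pfun f r1 r2 X Y z v"
proof -
  let ?h = "\<lambda>x. hfun f r1 r2 Y x z v"
  obtain x0 where x0: "x0 \<in> X" and min: "\<And>x. x \<in> X \<Longrightarrow> ?h x0 \<le> ?h x"
    using continuous_attains_inf[OF X(2,3) cont] by blast
  have p: "pfun f r1 r2 X Y z v = ?h x0"
    unfolding pfun_def by (rule cInf_eq_minimum) (use x0 min in auto)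
  have "x = x0" if x: "x \<in> X" "?h x = pfun f r1 r2 X Y z v" for x
  proof (rule ccontr)
    assume "x \<noteq> x0"
    then have "?h (midpoint x x0) < ?h x0"
      using strict[OF x(1) x0] x(2) p by simp
    moreover have "midpoint x x0 \<in> X"
      using X(1) x(1) x0 closed_segment_subset midpoint_in_closed_segment by blast
    ultimately show False
      using min[of "midpoint x x0"] by linarith
  qed
  then have "xarg f r1 r2 X Y z v = x0"
    unfolding xarg_def using x0 p by (intro the_equality) auto
  with x0 p show "xarg f r1 r2 X Y z v \<in> X" "?h (xarg f r1 r2 X Y z v) = pfun f r1 r2 X Y z v"
    by simp_all
qed

lemma qfun_eq_pfun_argmax:
  assumes "\<And>w. pfun f r1 r2 X Y z w \<le> pfun f r1 r2 X Y z v"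
  shows "qfun f r1 r2 X Y z = pfun f r1 r2 X Y z v"
  unfolding qfun_def by (rule cSup_eq_maximum) (use assms in auto)

lemma qfun_prox_descent:
  fixes f :: "'a::euclidean_space \<Rightarrow> 'b::euclidean_space \<Rightarrow> real"
  assumes X: "convex X" "compact X" "X \<noteq> {}" and Y: "compact Y" "Y \<noteq> {}"
    and cont: "continuous_on (X \<times> Y) (\<lambda>(x, y). f x y)"
    and cont_h: "\<And>z v. continuous_on X (\<lambda>x. hfun f r1 r2 Y x z v)"
    and strict: "\<And>z v a b. a \<in> X \<Longrightarrow> b \<in> X \<Longrightarrow> a \<noteq> b \<Longrightarrow>
      hfun f r1 r2 Y (midpoint a b) z v < (hfun f r1 r2 Y a z v + hfun f r1 r2 Y b z v) / 2"
    and vmax: "\<And>z w. pfun f r1 r2 X Y z w \<le> pfun f r1 r2 X Y z (vmax z)"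
  shows "qfun f r1 r2 X Y z' + r1 / 2 * ((z + z' - 2 *\<^sub>R xarg f r1 r2 X Y z (vmax z')) \<bullet> (z - z'))
           \<le> qfun f r1 r2 X Y z"
proof -
  define v where "v = vmax z'"
  define x where "x = xarg f r1 r2 X Y z v"
  have x: "x \<in> X" "hfun f r1 r2 Y x z v = pfun f r1 r2 X Y z v"
    unfolding x_def by (rule xarg_minimizes_hfun[OF X cont_h strict], assumption+)+
  have split: "hfun f r1 r2 Y x w v = hfun f 0 r2 Y x z v + r1 / 2 * (norm (x - w))\<^sup>2" for w
  proof -
    have "hfun f 0 r2 Y x w v = hfun f 0 r2 Y x z v"
      by (simp add: hfun_def Freg_def)
    then show ?thesis
      using hfun_prox_split[where f = f and x = x and r = r1 and z = w, OF Y continuous_on_section[OF cont x(1)]]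
      by simp
  qed
  have "qfun f r1 r2 X Y z' = pfun f r1 r2 X Y z' v"
    unfolding v_def by (rule qfun_eq_pfun_argmax[OF vmax])
  also have "\<dots> \<le> hfun f r1 r2 Y x z' v"
    by (rule pfun_le_hfun[OF X(2) cont_h x(1)])
  also have "\<dots> = hfun f r1 r2 Y x z v - r1 / 2 * ((norm (x - z))\<^sup>2 - (norm (x - z'))\<^sup>2)"
    unfolding split by (simp add: algebra_simps)
  also have "\<dots> = hfun f r1 r2 Y x z v - r1 / 2 * ((z + z' - 2 *\<^sub>R x) \<bullet> (z - z'))"
    by (simp only: norm_diff_sq_diff)
  also have "hfun f r1 r2 Y x z v \<le> qfun f r1 r2 X Y z"
    using x(2) vmax[of z v] qfun_eq_pfun_argmax[OF vmax, of z] by simp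
  finally show ?thesis
    by (simp add: x_def v_def)
qed

theorem lemma7:
  fixes f :: "'a::euclidean_space \<Rightarrow> 'b::euclidean_space \<Rightarrow> real"
    and gx :: "'a \<Rightarrow> 'b \<Rightarrow> 'a" and gy :: "'a \<Rightarrow> 'b \<Rightarrow> 'b"
    and X :: "'a set" and Y :: "'b set"
    and Lx Ly r1 r2 c \<alpha> \<beta> \<mu> :: real
    and vmax :: "'a \<Rightarrow> 'b"
    and xs zs :: "nat \<Rightarrow> 'a" and ys vs :: "nat \<Rightarrow> 'b"
    and t :: nat
  assumes X: "convex X" "compact X" "X \<noteq> {}"
      and Y: "convex Y" "compact Y" "Y \<noteq> {}"
      and deriv: "\<And>x y. ((\<lambda>(u, w). f u w) has_derivative
                    (\<lambda>(h, k). gx x y \<bullet> h + gy x y \<bullet> k)) (at (x, y))"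
      and cont_gx: "continuous_on UNIV (\<lambda>(x, y). gx x y)"
      and cont_gy: "continuous_on UNIV (\<lambda>(x, y). gy x y)"
      and Lpos: "Lx > 0" "Ly > 0"
      and Lip_x: "\<And>x x' y y'. x \<in> X \<Longrightarrow> x' \<in> X \<Longrightarrow> y \<in> Y \<Longrightarrow> y' \<in> Y \<Longrightarrow>
                   norm (gx x y - gx x' y') \<le> Lx * (norm (x - x') + norm (y - y'))"
      and Lip_y: "\<And>x x' y y'. x \<in> X \<Longrightarrow> x' \<in> X \<Longrightarrow> y \<in> Y \<Longrightarrow> y' \<in> Y \<Longrightarrow>
                   norm (gy x y - gy x' y') \<le> Ly * (norm (x - x') + norm (y - y'))"
      and r1: "r1 > Lx" and r2: "r2 > Ly"
      and vmax: "\<And>z w. pfun f r1 r2 X Y z w \<le> pfun f r1 r2 X Y z (vmax z)"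
      and steps: "c > 0" "\<alpha> > 0" "0 < \<beta>" "\<beta> < 1" "0 < \<mu>" "\<mu> < 1"
      and x_upd: "\<And>s. xs (Suc s) = closest_point X
                   (xs s - c *\<^sub>R (gx (xs s) (ys s) + r1 *\<^sub>R (xs s - zs s)))"
      and y_upd: "\<And>s. ys (Suc s) = closest_point Y
                   (ys s + \<alpha> *\<^sub>R (gy (xs (Suc s)) (ys s) - r2 *\<^sub>R (ys s - vs s)))"
      and z_upd: "\<And>s. zs (Suc s) = zs s + \<beta> *\<^sub>R (xs (Suc s) - zs s)"
      and v_upd: "\<And>s. vs (Suc s) = vs s + \<mu> *\<^sub>R (ys (Suc s) - vs s)"
  shows "qfun f r1 r2 X Y (zs t) \<ge> qfun f r1 r2 X Y (zs (Suc t))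
           + r1 / 2 * ((zs t + zs (Suc t) - 2 *\<^sub>R xarg f r1 r2 X Y (zs t) (vmax (zs (Suc t))))
                        \<bullet> (zs t - zs (Suc t)))"
proof -
  have "continuous_on UNIV (\<lambda>(x, y). f x y)"
    by (metis deriv has_derivative_continuous continuous_at_imp_continuous_on surj_pair)
  then have cont: "continuous_on (X \<times> Y) (\<lambda>(x, y). f x y)"
    by (rule continuous_on_subset) simp
  have partial: "((\<lambda>u. f u y) has_derivative (\<lambda>h. gx x y \<bullet> h)) (at x)"
    if "x \<in> X" "y \<in> Y" for x y
    by (rule has_derivative_partial_fst[OF deriv])
  have lip: "norm (gx x y - gx x' y) \<le> Lx * norm (x - x')" if "x \<in> X" "x' \<in> X" "y \<in> Y" for x x' y
    using Lip_x[OF that(1,2) that(3) that(3)] by simp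
  have cont_h: "continuous_on X (\<lambda>x. hfun f r1 r2 Y x z v)" for z v
    unfolding hfun_def by (intro continuous_on_SUP_compact X(2) Y(2,3) continuous_on_Freg cont)
  have strict: "hfun f r1 r2 Y (midpoint a b) z v < (hfun f r1 r2 Y a z v + hfun f r1 r2 Y b z v) / 2"
    if "a \<in> X" "b \<in> X" "a \<noteq> b" for z v a b
  proof -
    have "hfun f r1 r2 Y (midpoint a b) z v
        \<le> (hfun f r1 r2 Y a z v + hfun f r1 r2 Y b z v) / 2 - (r1 - Lx) / 8 * (norm (a - b))\<^sup>2"
      using X(1,2) Y(2,3) cont partial lip that(1,2) by (rule hfun_midpoint_le)
    moreover have "0 < (r1 - Lx) / 8 * (norm (a - b))\<^sup>2"
      using r1 that(3) by simp
    ultimately show ?thesis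
      by linarith
  qed
  show ?thesis
    using qfun_prox_descent[OF X Y(2,3) cont cont_h strict vmax] by simp
qed

end
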